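(* Let $G$ be a domino-free bipartite graph with color classes $X,Y$ and no universal vertex, and let $\mathcal{L}(G)=(\mathcal{B}(G)\cup\{\bot,\top\},\preceq)$ be its Galois lattice, with meet $\wedge$ and join $\vee$. Then for any $B^1,B^2\in\mathcal{B}(G)$ that are incomparable under $\preceq$, $$B^1\wedge B^2\neq\bot\ \Rightarrow\ B^1\vee B^2=\top \qquad\text{and}\qquad B^1\vee B^2\neq\top\ \Rightarrow\ B^1\wedge B^2=\bot.$$
   Context: A domino is the graph obtained from the chordless cycle $C_6$ by adding a chord between two antipodal vertices; domino-free means no induced domino. A biclique is a vertex set inducing a complete bipartite subgraph, with shores $X(B)=B\cap X$, $Y(B)=B\cap Y$; $\mathcal{B}(G)$ is the set of inclusion-wise maximal bicliques, ordered by $B\preceq B'\iff X(B)\subseteq X(B')$ (equivalently $Y(B)\supseteq Y(B')$). $\mathcal{L}(G)$ adds a bottom $\bot$ with $X(\bot)=\emptyset$, $Y(\bot)=Y$ and a top $\top$ with $X(\top)=X$, $Y(\top)=\emptyset$; this poset is a lattice. A universal vertex is adjacent to all vertices of the opposite color class. *)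

theory Defs
  imports Main
begin

definition bipartite_graph :: "'a set \<Rightarrow> 'a set \<Rightarrow> ('a \<Rightarrow> 'a \<Rightarrow> bool) \<Rightarrow> bool" where
  "bipartite_graph X Y E \<longleftrightarrow> finite X \<and> finite Y \<and> X \<inter> Y = {} \<and>
     (\<forall>u v. E u v \<longrightarrow> E v u) \<and>
     (\<forall>u v. E u v \<longrightarrow> (u \<in> X \<and> v \<in> Y) \<or> (u \<in> Y \<and> v \<in> X))"

text \<open>Edges of the domino on vertices 0..5: the 6-cycle 0-1-2-3-4-5-0 plus the
chord between the antipodal vertices 0 and 3.\<close>

definition domino_edges :: "nat set set" where
  "domino_edges = {{0,1},{1,2},{2,3},{3,4},{4,5},{5,0},{0,3}}"

definition has_induced_domino :: "'a set \<Rightarrow> ('a \<Rightarrow> 'a \<Rightarrow> bool) \<Rightarrow> bool" where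
  "has_induced_domino V E \<longleftrightarrow> (\<exists>vs :: 'a list. length vs = 6 \<and> distinct vs \<and> set vs \<subseteq> V \<and>
     (\<forall>i<6. \<forall>j<6. i \<noteq> j \<longrightarrow> (E (vs ! i) (vs ! j) \<longleftrightarrow> {i, j} \<in> domino_edges)))"

definition domino_free :: "'a set \<Rightarrow> 'a set \<Rightarrow> ('a \<Rightarrow> 'a \<Rightarrow> bool) \<Rightarrow> bool" where
  "domino_free X Y E \<longleftrightarrow> \<not> has_induced_domino (X \<union> Y) E"

definition universal_vertex :: "'a set \<Rightarrow> 'a set \<Rightarrow> ('a \<Rightarrow> 'a \<Rightarrow> bool) \<Rightarrow> 'a \<Rightarrow> bool" where
  "universal_vertex X Y E v \<longleftrightarrow>
     (v \<in> X \<and> (\<forall>y\<in>Y. E v y)) \<or> (v \<in> Y \<and> (\<forall>x\<in>X. E x v))"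

text \<open>A biclique: a vertex set inducing a complete bipartite subgraph K_{p,q}
with p, q \<ge> 1 (both shores nonempty; the degenerate ones are the added
bottom and top of the Galois lattice).\<close>

definition biclique :: "'a set \<Rightarrow> 'a set \<Rightarrow> ('a \<Rightarrow> 'a \<Rightarrow> bool) \<Rightarrow> 'a set \<Rightarrow> bool" where
  "biclique X Y E B \<longleftrightarrow> B \<subseteq> X \<union> Y \<and> B \<inter> X \<noteq> {} \<and> B \<inter> Y \<noteq> {} \<and>
     (\<forall>x\<in>B \<inter> X. \<forall>y\<in>B \<inter> Y. E x y)"

definition max_bicliques :: "'a set \<Rightarrow> 'a set \<Rightarrow> ('a \<Rightarrow> 'a \<Rightarrow> bool) \<Rightarrow> 'a set set" where
  "max_bicliques X Y E = {B. biclique X Y E B \<and>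
     (\<forall>B'. biclique X Y E B' \<and> B \<subseteq> B' \<longrightarrow> B' = B)}"

text \<open>Galois lattice: elements are the maximal bicliques plus bottom (the vertex
set Y, i.e. X-shore empty, Y-shore Y) and top (the vertex set X).\<close>

definition gbot :: "'a set \<Rightarrow> 'a set \<Rightarrow> 'a set" where "gbot X Y = Y"
definition gtop :: "'a set \<Rightarrow> 'a set \<Rightarrow> 'a set" where "gtop X Y = X"

definition galois_lattice :: "'a set \<Rightarrow> 'a set \<Rightarrow> ('a \<Rightarrow> 'a \<Rightarrow> bool) \<Rightarrow> 'a set set" where
  "galois_lattice X Y E = max_bicliques X Y E \<union> {gbot X Y, gtop X Y}"

definition gle :: "'a set \<Rightarrow> 'a set \<Rightarrow> 'a set \<Rightarrow> bool" where
  "gle X B B' \<longleftrightarrow> B \<inter> X \<subseteq> B' \<inter> X"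

definition is_meet :: "'a set \<Rightarrow> 'a set \<Rightarrow> ('a \<Rightarrow> 'a \<Rightarrow> bool) \<Rightarrow> 'a set \<Rightarrow> 'a set \<Rightarrow> 'a set \<Rightarrow> bool" where
  "is_meet X Y E M B1 B2 \<longleftrightarrow> M \<in> galois_lattice X Y E \<and> gle X M B1 \<and> gle X M B2 \<and>
     (\<forall>C \<in> galois_lattice X Y E. gle X C B1 \<and> gle X C B2 \<longrightarrow> gle X C M)"

definition is_join :: "'a set \<Rightarrow> 'a set \<Rightarrow> ('a \<Rightarrow> 'a \<Rightarrow> bool) \<Rightarrow> 'a set \<Rightarrow> 'a set \<Rightarrow> 'a set \<Rightarrow> bool" where
  "is_join X Y E J B1 B2 \<longleftrightarrow> J \<in> galois_lattice X Y E \<and> gle X B1 J \<and> gle X B2 J \<and>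
     (\<forall>C \<in> galois_lattice X Y E. gle X B1 C \<and> gle X B2 C \<longrightarrow> gle X J C)"

end

theory Submission
  imports Defs
begin

text \<open>If two incomparable maximal bicliques \<open>B\<^sup>1, B\<^sup>2\<close> shared a vertex
\<open>x \<in> X\<close> and a vertex \<open>y \<in> Y\<close>, pick \<open>x\<^sub>1 \<in> X(B\<^sup>1) - X(B\<^sup>2)\<close> and
\<open>x\<^sub>2 \<in> X(B\<^sup>2) - X(B\<^sup>1)\<close>. By maximality \<open>x\<^sub>2\<close> misses some \<open>y\<^sub>1 \<in> Y(B\<^sup>1)\<close>
and \<open>x\<^sub>1\<close> misses some \<open>y\<^sub>2 \<in> Y(B\<^sup>2)\<close>, and then \<open>x y\<^sub>1 x\<^sub>1 y x\<^sub>2 y\<^sub>2\<close>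
induces a domino with chord \<open>xy\<close>. A meet above \<open>\<bottom>\<close> yields a common
\<open>x\<close>, a join below \<open>\<top>\<close> a common \<open>y\<close>, so both cannot happen at once.\<close>

lemma max_biclique_contains_X_vertex:
  assumes "bipartite_graph X Y E" and "B \<in> max_bicliques X Y E"
    and "v \<in> X" and "\<forall>y\<in>B \<inter> Y. E v y"
  shows "v \<in> B"
proof -
  have "X \<inter> Y = {}" using assms(1) unfolding bipartite_graph_def by auto
  then have "biclique X Y E (insert v B)"
    using assms(2-4) unfolding max_bicliques_def biclique_def by auto
  then show ?thesis using assms(2) unfolding max_bicliques_def by blast
qed

lemma max_biclique_contains_Y_vertex:
  assumes "bipartite_graph X Y E" and "B \<in> max_bicliques X Y E"
    and "v \<in> Y" and "\<forall>x\<in>B \<inter> X. E x v"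
  shows "v \<in> B"
proof -
  have "X \<inter> Y = {}" using assms(1) unfolding bipartite_graph_def by auto
  then have "biclique X Y E (insert v B)"
    using assms(2-4) unfolding max_bicliques_def biclique_def by auto
  then show ?thesis using assms(2) unfolding max_bicliques_def by blast
qed

lemma all_less_6_iff:
  "(\<forall>i<(6::nat). P i) \<longleftrightarrow> P 0 \<and> P 1 \<and> P 2 \<and> P 3 \<and> P 4 \<and> P 5"
proof -
  have "i < 6 \<longleftrightarrow> i \<in> {0, 1, 2, 3, 4, 5}" for i :: nat by auto
  then show ?thesis by auto
qed

lemma mem_domino_edges_iff:
  "{i, j} \<in> domino_edges \<longleftrightarrow> (i, j) \<in> {(0,1),(1,0),(1,2),(2,1),(2,3),(3,2),(3,4),(4,3),
     (4,5),(5,4),(5,0),(0,5),(0,3),(3,0)}"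
  unfolding domino_edges_def by (auto simp: doubleton_eq_iff)

lemma has_induced_domino_bipartite:
  assumes bg: "bipartite_graph X Y E"
    and X: "x \<in> X" "x\<^sub>1 \<in> X" "x\<^sub>2 \<in> X" and Y: "y \<in> Y" "y\<^sub>1 \<in> Y" "y\<^sub>2 \<in> Y"
    and edges: "E x y" "E x y\<^sub>1" "E x y\<^sub>2" "E x\<^sub>1 y" "E x\<^sub>1 y\<^sub>1" "E x\<^sub>2 y" "E x\<^sub>2 y\<^sub>2"
    and non_edges: "\<not> E x\<^sub>1 y\<^sub>2" "\<not> E x\<^sub>2 y\<^sub>1"
  shows "has_induced_domino (X \<union> Y) E"
proof -
  have disj: "X \<inter> Y = {}" and sym: "\<And>u v. E u v \<Longrightarrow> E v u"
    and side: "\<And>u v. E u v \<Longrightarrow> (u \<in> X \<and> v \<in> Y) \<or> (u \<in> Y \<and> v \<in> X)"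
    using bg unfolding bipartite_graph_def by auto
  have no_XX: "\<not> E u v" if "u \<in> X" "v \<in> X" for u v using side that disj by blast
  have no_YY: "\<not> E u v" if "u \<in> Y" "v \<in> Y" for u v using side that disj by blast
  have non_edges': "\<not> E y\<^sub>2 x\<^sub>1" "\<not> E y\<^sub>1 x\<^sub>2" using non_edges sym by blast+
  let ?vs = "[x, y\<^sub>1, x\<^sub>1, y, x\<^sub>2, y\<^sub>2]"
  \<comment> \<open>distinctness within a colour class is witnessed by the (non-)edges\<close>
  have "distinct ?vs"
    using X Y disj edges non_edges by auto
  moreover have "\<forall>i<6. \<forall>j<6. i \<noteq> j \<longrightarrow> (E (?vs ! i) (?vs ! j) \<longleftrightarrow> {i, j} \<in> domino_edges)"
    unfolding all_less_6_iff mem_domino_edges_iff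
    using X Y edges non_edges non_edges' sym no_XX no_YY by simp
  ultimately show ?thesis
    unfolding has_induced_domino_def using X Y by (intro exI[of _ ?vs]) auto
qed

lemma incomparable_max_bicliques_disjoint_shore:
  assumes bg: "bipartite_graph X Y E" and "domino_free X Y E"
    and B1: "B\<^sub>1 \<in> max_bicliques X Y E" and B2: "B\<^sub>2 \<in> max_bicliques X Y E"
    and "\<not> gle X B\<^sub>1 B\<^sub>2" and "\<not> gle X B\<^sub>2 B\<^sub>1"
  shows "B\<^sub>1 \<inter> B\<^sub>2 \<inter> X = {} \<or> B\<^sub>1 \<inter> B\<^sub>2 \<inter> Y = {}"
proof (rule ccontr)
  assume "\<not> ?thesis"
  then obtain x y where x: "x \<in> X" "x \<in> B\<^sub>1" "x \<in> B\<^sub>2" and y: "y \<in> Y" "y \<in> B\<^sub>1" "y \<in> B\<^sub>2"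
    by blast
  obtain x\<^sub>1 where x\<^sub>1: "x\<^sub>1 \<in> X" "x\<^sub>1 \<in> B\<^sub>1" "x\<^sub>1 \<notin> B\<^sub>2"
    using \<open>\<not> gle X B\<^sub>1 B\<^sub>2\<close> unfolding gle_def by auto
  obtain x\<^sub>2 where x\<^sub>2: "x\<^sub>2 \<in> X" "x\<^sub>2 \<in> B\<^sub>2" "x\<^sub>2 \<notin> B\<^sub>1"
    using \<open>\<not> gle X B\<^sub>2 B\<^sub>1\<close> unfolding gle_def by auto
  obtain y\<^sub>1 where y\<^sub>1: "y\<^sub>1 \<in> Y" "y\<^sub>1 \<in> B\<^sub>1" "\<not> E x\<^sub>2 y\<^sub>1"
    using max_biclique_contains_X_vertex[OF bg B1 x\<^sub>2(1)] x\<^sub>2(3) by auto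
  obtain y\<^sub>2 where y\<^sub>2: "y\<^sub>2 \<in> Y" "y\<^sub>2 \<in> B\<^sub>2" "\<not> E x\<^sub>1 y\<^sub>2"
    using max_biclique_contains_X_vertex[OF bg B2 x\<^sub>1(1)] x\<^sub>1(3) by auto
  have "biclique X Y E B\<^sub>1" "biclique X Y E B\<^sub>2"
    using B1 B2 unfolding max_bicliques_def by auto
  then have "E x y" "E x y\<^sub>1" "E x y\<^sub>2" "E x\<^sub>1 y" "E x\<^sub>1 y\<^sub>1" "E x\<^sub>2 y" "E x\<^sub>2 y\<^sub>2"
    using x y x\<^sub>1 x\<^sub>2 y\<^sub>1 y\<^sub>2 unfolding biclique_def by auto
  then have "has_induced_domino (X \<union> Y) E"
    using has_induced_domino_bipartite[OF bg] x y x\<^sub>1 x\<^sub>2 y\<^sub>1 y\<^sub>2 by blast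
  then show False using \<open>domino_free X Y E\<close> unfolding domino_free_def by blast
qed

lemma meet_ne_bot_common_X_vertex:
  assumes "is_meet X Y E M B\<^sub>1 B\<^sub>2" and "M \<noteq> gbot X Y" and "\<not> gle X B\<^sub>2 B\<^sub>1"
  shows "B\<^sub>1 \<inter> B\<^sub>2 \<inter> X \<noteq> {}"
proof -
  have M: "M \<in> galois_lattice X Y E" "M \<inter> X \<subseteq> B\<^sub>1 \<inter> X" "M \<inter> X \<subseteq> B\<^sub>2 \<inter> X"
    using assms(1) unfolding is_meet_def gle_def by auto
  show ?thesis
  proof (cases "M \<in> max_bicliques X Y E")
    case True
    then have "M \<inter> X \<noteq> {}" unfolding max_bicliques_def biclique_def by auto
    with M show ?thesis by blast
  next
    case False
    then have "M = X" using M(1) assms(2) unfolding galois_lattice_def gtop_def by auto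
    with M assms(3) show ?thesis unfolding gle_def by auto
  qed
qed

lemma join_ne_top_common_Y_vertex:
  assumes bg: "bipartite_graph X Y E"
    and B1: "B\<^sub>1 \<in> max_bicliques X Y E" and B2: "B\<^sub>2 \<in> max_bicliques X Y E"
    and "is_join X Y E J B\<^sub>1 B\<^sub>2" and "J \<noteq> gtop X Y"
  shows "B\<^sub>1 \<inter> B\<^sub>2 \<inter> Y \<noteq> {}"
proof -
  have J: "J \<in> galois_lattice X Y E" "B\<^sub>1 \<inter> X \<subseteq> J \<inter> X" "B\<^sub>2 \<inter> X \<subseteq> J \<inter> X"
    using assms(4) unfolding is_join_def gle_def by auto
  have "biclique X Y E B\<^sub>1" using B1 unfolding max_bicliques_def by auto
  have "J \<in> max_bicliques X Y E"
  proof (rule ccontr)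
    assume "J \<notin> max_bicliques X Y E"
    then have "J = Y" using J(1) assms(5) unfolding galois_lattice_def gbot_def by auto
    with J(2) \<open>biclique X Y E B\<^sub>1\<close> bg show False
      unfolding biclique_def bipartite_graph_def by auto
  qed
  then have J_biclique: "biclique X Y E J" unfolding max_bicliques_def by auto
  then obtain y where y: "y \<in> J" "y \<in> Y" unfolding biclique_def by auto
  have "\<forall>x\<in>B\<^sub>1 \<inter> X. E x y" "\<forall>x\<in>B\<^sub>2 \<inter> X. E x y"
    using J J_biclique y unfolding biclique_def by blast+
  then have "y \<in> B\<^sub>1" "y \<in> B\<^sub>2"
    using max_biclique_contains_Y_vertex[OF bg B1 y(2)]
      max_biclique_contains_Y_vertex[OF bg B2 y(2)] by blast+
  with y show ?thesis by blast
qed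

theorem lemma1:
  fixes X Y :: "'a set" and E :: "'a \<Rightarrow> 'a \<Rightarrow> bool"
  assumes "bipartite_graph X Y E"
    and "domino_free X Y E"
    and "\<forall>v. \<not> universal_vertex X Y E v"
    and "B1 \<in> max_bicliques X Y E" and "B2 \<in> max_bicliques X Y E"
    and "\<not> gle X B1 B2" and "\<not> gle X B2 B1"
    and "is_meet X Y E M B1 B2" and "is_join X Y E J B1 B2"
  shows "(M \<noteq> gbot X Y \<longrightarrow> J = gtop X Y) \<and> (J \<noteq> gtop X Y \<longrightarrow> M = gbot X Y)"
proof -
  have "\<not> (M \<noteq> gbot X Y \<and> J \<noteq> gtop X Y)"
  proof
    assume "M \<noteq> gbot X Y \<and> J \<noteq> gtop X Y"
    then have "B1 \<inter> B2 \<inter> X \<noteq> {}" "B1 \<inter> B2 \<inter> Y \<noteq> {}"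
      using meet_ne_bot_common_X_vertex[OF assms(8) _ assms(7)]
        join_ne_top_common_Y_vertex[OF assms(1,4,5,9)] by auto
    then show False
      using incomparable_max_bicliques_disjoint_shore[OF assms(1,2,4-7)] by blast
  qed
  then show ?thesis by blast
qed

end
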